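(* Suppose $|X|\ge3$ and let $t$ be a full support, state independent transition function, written $t(x)\in\Delta(\mathcal{L}(X))$. Then $t$ is menu invariant if and only if $t(x)=t(y)$ for all $x,y\in X$.
   Context: $X$ is finite, $\mathcal{X}_2$ the subsets of $X$ with at least two elements, $\mathcal{L}(X)$ the linear orders on $X$, $M(\succ,A)$ the $\succ$-maximal element of $A$. A transition function $t:X\times\mathcal{L}(X)\to\Delta(\mathcal{L}(X))$ is full support if all values have full support, and state independent if $t(x,\succ)=t(x,\succ')$ for all $x,\succ,\succ'$. For $A\in\mathcal{X}_2$, $M_A$ is the Markov matrix on $\mathcal{L}(X)$ with $m_A(\succ,\succ')=t_{\succ'}(M(\succ,A),\succ)$ (probability of $\succ'$ under $t(M(\succ,A),\succ)$), with unique stationary distribution $\nu_A$. $t$ is menu invariant if $\nu_A=\nu_B$ for all $A,B\in\mathcal{X}_2$. *)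

theory Defs
  imports "HOL-Probability.Probability"
begin

text \<open>Linear orders on X (X a finite type): strict linear orders, (x,y) in r meaning x \<succ> y.\<close>
definition LO :: "'a rel set" where
  "LO = {r. strict_linear_order r}"

definition X2 :: "'a::finite set set" where
  "X2 = {A. 2 \<le> card A}"

definition maxel :: "'a rel \<Rightarrow> 'a set \<Rightarrow> 'a" where
  "maxel r A = (THE x. x \<in> A \<and> (\<forall>y\<in>A. y \<noteq> x \<longrightarrow> (x, y) \<in> r))"

definition transition_fun :: "('a \<Rightarrow> 'a rel \<Rightarrow> 'a rel pmf) \<Rightarrow> bool" where
  "transition_fun t \<longleftrightarrow> (\<forall>x. \<forall>r\<in>LO. set_pmf (t x r) \<subseteq> LO)"

definition full_support :: "('a \<Rightarrow> 'a rel \<Rightarrow> 'a rel pmf) \<Rightarrow> bool" where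
  "full_support t \<longleftrightarrow> (\<forall>x. \<forall>r\<in>LO. set_pmf (t x r) = LO)"

definition state_independent :: "('a \<Rightarrow> 'a rel \<Rightarrow> 'a rel pmf) \<Rightarrow> bool" where
  "state_independent t \<longleftrightarrow> (\<forall>x. \<forall>r\<in>LO. \<forall>r'\<in>LO. t x r = t x r')"

definition markov_entry :: "('a \<Rightarrow> 'a rel \<Rightarrow> 'a rel pmf) \<Rightarrow> 'a set \<Rightarrow> 'a rel \<Rightarrow> 'a rel \<Rightarrow> real" where
  "markov_entry t A r r' = pmf (t (maxel r A) r) r'"

definition stationary :: "('a::finite \<Rightarrow> 'a rel \<Rightarrow> 'a rel pmf) \<Rightarrow> 'a set \<Rightarrow> 'a rel pmf \<Rightarrow> bool" where
  "stationary t A \<nu> \<longleftrightarrow> set_pmf \<nu> \<subseteq> LO \<and>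
     (\<forall>r'\<in>LO. pmf \<nu> r' = (\<Sum>r\<in>LO. pmf \<nu> r * markov_entry t A r r'))"

definition stat_dist :: "('a::finite \<Rightarrow> 'a rel \<Rightarrow> 'a rel pmf) \<Rightarrow> 'a set \<Rightarrow> 'a rel pmf" where
  "stat_dist t A = (THE \<nu>. stationary t A \<nu>)"

definition menu_invariant :: "('a::finite \<Rightarrow> 'a rel \<Rightarrow> 'a rel pmf) \<Rightarrow> bool" where
  "menu_invariant t \<longleftrightarrow> (\<forall>A\<in>X2. \<forall>B\<in>X2. stat_dist t A = stat_dist t B)"

end

theory Submission
  imports Defs
begin

(* Under state independence write P x for t x r. A stationary distribution of M_A is then a
   mixture of the P x with x in A. For a pair {x, y}, which of x and y ranks higher is itself a
   two-state Markov chain, so nu_{x,y} = a P x + (1 - a) P y with 0 < a < 1 by full support.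
   If nu_{x,y} = nu_{x,z} = nu_{y,z}, the differences between nu and P x, P y, P z pairwise have
   opposite signs at every order, so they all vanish and P x = P y. Conversely, if all P x equal
   one P, then P is the unique stationary distribution of every M_A. *)

lemma sgn_convex_comb_eq_0:
  fixes p X Y :: real
  assumes "0 < p" "p < 1" "p * X + (1 - p) * Y = 0"
  shows "sgn X = - sgn Y"
proof -
  have "X = - ((1 - p) / p) * Y"
    using assms by (simp add: field_simps)
  then show ?thesis
    using assms by (simp add: sgn_mult)
qed

lemma convex_comb_triangle_eq:
  fixes a b c u v w n :: real
  assumes "0 < a" "a < 1" "0 < b" "b < 1" "0 < c" "c < 1"
    and "n = a * u + (1 - a) * v" "n = b * u + (1 - b) * w" "n = c * v + (1 - c) * w"
  shows "u = v"
proof -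
  have uv: "sgn (u - n) = - sgn (v - n)"
    using assms(1,2) by (rule sgn_convex_comb_eq_0) (simp add: assms(7) algebra_simps)
  have uw: "sgn (u - n) = - sgn (w - n)"
    using assms(3,4) by (rule sgn_convex_comb_eq_0) (simp add: assms(8) algebra_simps)
  have vw: "sgn (v - n) = - sgn (w - n)"
    using assms(5,6) by (rule sgn_convex_comb_eq_0) (simp add: assms(9) algebra_simps)
  from uv uw vw have "sgn (u - n) = 0" "sgn (v - n) = 0"
    by linarith+
  then show ?thesis
    by (simp add: sgn_0_0)
qed

lemma pmf_eq_on_supportI:
  assumes "set_pmf p \<subseteq> S" "set_pmf q \<subseteq> S" "\<And>x. x \<in> S \<Longrightarrow> pmf p x = pmf q x"
  shows "p = q"
proof (rule pmf_eqI)
  fix x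
  show "pmf p x = pmf q x"
  proof (cases "x \<in> S")
    case False
    then show ?thesis
      using assms(1,2) by (metis pmf_eq_0_set_pmf subsetD)
  qed (rule assms(3))
qed

definition mix_pmf :: "real \<Rightarrow> 'a pmf \<Rightarrow> 'a pmf \<Rightarrow> 'a pmf" where
  "mix_pmf \<alpha> p q = bind_pmf (bernoulli_pmf \<alpha>) (\<lambda>b. if b then p else q)"

lemma pmf_mix_pmf:
  "0 \<le> \<alpha> \<Longrightarrow> \<alpha> \<le> 1 \<Longrightarrow> pmf (mix_pmf \<alpha> p q) x = \<alpha> * pmf p x + (1 - \<alpha>) * pmf q x"
  by (simp add: mix_pmf_def pmf_bind)

lemma set_mix_pmf_subset: "set_pmf (mix_pmf \<alpha> p q) \<subseteq> set_pmf p \<union> set_pmf q"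
  by (auto simp: mix_pmf_def split: if_splits)

lemma prob_mix_pmf:
  assumes "0 \<le> \<alpha>" "\<alpha> \<le> 1" "finite E"
  shows "measure_pmf.prob (mix_pmf \<alpha> p q) E = \<alpha> * measure_pmf.prob p E + (1 - \<alpha>) * measure_pmf.prob q E"
  using assms by (simp add: measure_measure_pmf_finite pmf_mix_pmf sum.distrib sum_distrib_left)

lemma prob_mix_pmf_eq_weight_iff:
  assumes "0 \<le> \<beta>" "\<beta> \<le> 1" "finite E" "0 < measure_pmf.prob q E"
  shows "measure_pmf.prob (mix_pmf \<beta> p q) E = \<beta>
           \<longleftrightarrow> \<beta> = measure_pmf.prob q E / ((1 - measure_pmf.prob p E) + measure_pmf.prob q E)"
proof -
  have "measure_pmf.prob (mix_pmf \<beta> p q) E - \<beta>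
      = measure_pmf.prob q E - \<beta> * ((1 - measure_pmf.prob p E) + measure_pmf.prob q E)"
    unfolding prob_mix_pmf[OF assms(1-3)] by (simp add: algebra_simps)
  moreover have "(1 - measure_pmf.prob p E) + measure_pmf.prob q E \<noteq> 0"
    using assms(4) measure_pmf.prob_le_1[of p E] by linarith
  ultimately show ?thesis
    by (simp add: eq_divide_eq) argo
qed

lemma mix_pmf_triangle_eq:
  assumes "0 < a" "a < 1" "0 < b" "b < 1" "0 < c" "c < 1"
    and "mix_pmf b p s = mix_pmf a p q" "mix_pmf c q s = mix_pmf a p q"
  shows "p = q"
proof (rule pmf_eqI)
  fix x
  let ?n = "pmf (mix_pmf a p q) x"
  have "?n = a * pmf p x + (1 - a) * pmf q x"
    using assms(1,2) by (simp add: pmf_mix_pmf)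
  moreover have "?n = b * pmf p x + (1 - b) * pmf s x"
    using assms(3,4) by (simp flip: assms(7) add: pmf_mix_pmf)
  moreover have "?n = c * pmf q x + (1 - c) * pmf s x"
    using assms(5,6) by (simp flip: assms(8) add: pmf_mix_pmf)
  ultimately show "pmf p x = pmf q x"
    using assms(1-6) by (rule convex_comb_triangle_eq[rotated 6])
qed

lemma finite_LO: "finite (LO :: 'a::finite rel set)"
  by (rule finite_subset[of _ UNIV]) auto

lemma LO_asym: "r \<in> LO \<Longrightarrow> (x, y) \<in> r \<Longrightarrow> (y, x) \<notin> r"
  unfolding LO_def strict_linear_order_on_def irrefl_def by (auto dest: transD)

lemma LO_total: "r \<in> LO \<Longrightarrow> x \<noteq> y \<Longrightarrow> (x, y) \<in> r \<or> (y, x) \<in> r"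
  unfolding LO_def strict_linear_order_on_def total_on_def by auto

lemma inj_less_in_LO:
  fixes h :: "'a \<Rightarrow> 'b::linorder"
  assumes "inj h"
  shows "{(a, b). h a < h b} \<in> LO"
proof -
  have "h a < h b \<or> h b < h a" if "a \<noteq> b" for a b
    using assms that by (metis injD linorder_neqE)
  then show ?thesis
    unfolding LO_def strict_linear_order_on_def trans_def irrefl_def total_on_def by auto
qed

lemma LO_nonempty: "LO \<noteq> ({} :: 'a::countable rel set)"
proof -
  have "{(a, b). to_nat a < to_nat b} \<in> (LO :: 'a rel set)"
    by (rule inj_less_in_LO[OF inj_to_nat])
  then show ?thesis
    by blast
qed

lemma ex_LO_pair:
  fixes x y :: "'a::countable"
  assumes "x \<noteq> y"
  shows "\<exists>r\<in>LO. (x, y) \<in> r"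
proof -
  define h where "h a = (if a = x then 0 else if a = y then 1 else to_nat a + 2)" for a :: 'a
  have "inj h"
    using assms by (auto simp: inj_def h_def split: if_splits)
  then have "{(a, b). h a < h b} \<in> LO"
    by (rule inj_less_in_LO)
  moreover have "(x, y) \<in> {(a, b). h a < h b}"
    using assms by (simp add: h_def)
  ultimately show ?thesis ..
qed

lemma maxel_pair: "r \<in> LO \<Longrightarrow> (x, y) \<in> r \<Longrightarrow> maxel r {x, y} = x"
  unfolding maxel_def by (rule the_equality) (auto dest: LO_asym)

lemma prob_LO_diff:
  fixes \<mu> :: "'a::finite rel pmf"
  assumes "set_pmf \<mu> \<subseteq> LO" "E \<subseteq> LO"
  shows "measure_pmf.prob \<mu> (LO - E) = 1 - measure_pmf.prob \<mu> E"
proof -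
  have "measure_pmf.prob \<mu> LO = 1"
    using assms by (simp add: measure_pmf.prob_eq_1 AE_measure_pmf_iff subset_eq)
  then show ?thesis
    using measure_pmf.finite_measure_Diff'[of LO \<mu> E] assms(2) by (simp add: Int_absorb1)
qed

lemma stat_dist_eqI:
  assumes "\<And>\<nu>. stationary t A \<nu> \<longleftrightarrow> \<nu> = \<mu>"
  shows "stat_dist t A = \<mu>"
  unfolding stat_dist_def using assms by blast

lemma stationary_iff_eq_step:
  fixes t :: "'a::finite \<Rightarrow> 'a rel \<Rightarrow> 'a rel pmf"
  assumes "set_pmf \<nu> \<subseteq> LO" "set_pmf \<mu> \<subseteq> LO"
    and "\<And>r'. r' \<in> LO \<Longrightarrow> (\<Sum>r\<in>LO. pmf \<nu> r * markov_entry t A r r') = pmf \<mu> r'"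
  shows "stationary t A \<nu> \<longleftrightarrow> \<nu> = \<mu>"
  using assms pmf_eq_on_supportI[OF assms(1,2)] unfolding stationary_def by auto

lemma stat_dist_const:
  fixes t :: "'a::finite \<Rightarrow> 'a rel \<Rightarrow> 'a rel pmf"
  assumes t: "\<And>x r. r \<in> LO \<Longrightarrow> t x r = p" and p: "set_pmf p \<subseteq> LO"
  shows "stat_dist t A = p"
proof (rule stat_dist_eqI)
  fix \<nu>
  show "stationary t A \<nu> \<longleftrightarrow> \<nu> = p"
  proof (cases "set_pmf \<nu> \<subseteq> LO")
    case True
    have "(\<Sum>r\<in>LO. pmf \<nu> r * markov_entry t A r r') = (\<Sum>r\<in>LO. pmf \<nu> r) * pmf p r'" for r'
      unfolding sum_distrib_right by (rule sum.cong) (simp_all add: markov_entry_def t)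
    then have "(\<Sum>r\<in>LO. pmf \<nu> r * markov_entry t A r r') = pmf p r'" for r'
      by (simp add: sum_pmf_eq_1[OF finite_LO True])
    with True p show ?thesis
      by (rule stationary_iff_eq_step)
  next
    case False
    with p show ?thesis
      unfolding stationary_def by auto
  qed
qed

lemma markov_entry_pair:
  assumes "state_independent t" "r0 \<in> LO" "r \<in> LO" "x \<noteq> y"
  shows "markov_entry t {x, y} r r' = pmf (if (x, y) \<in> r then t x r0 else t y r0) r'"
proof -
  have "maxel r {x, y} = (if (x, y) \<in> r then x else y)"
    using maxel_pair[OF assms(3), of x y] maxel_pair[OF assms(3), of y x] LO_total[OF assms(3,4)]
    by (auto simp: insert_commute)
  moreover have "t z r = t z r0" for z
    using assms(1-3) unfolding state_independent_def by blast
  ultimately show ?thesis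
    by (simp add: markov_entry_def)
qed

lemma markov_step_pair:
  fixes t :: "'a::finite \<Rightarrow> 'a rel \<Rightarrow> 'a rel pmf"
  assumes "state_independent t" "r0 \<in> LO" "x \<noteq> y" "set_pmf \<mu> \<subseteq> LO"
  defines "E \<equiv> {r \<in> LO. (x, y) \<in> r}"
  shows "(\<Sum>r\<in>LO. pmf \<mu> r * markov_entry t {x, y} r r')
           = pmf (mix_pmf (measure_pmf.prob \<mu> E) (t x r0) (t y r0)) r'"
proof -
  have E: "finite E" "E \<subseteq> LO"
    using finite_LO unfolding E_def by auto
  have "(\<Sum>r\<in>LO. pmf \<mu> r * markov_entry t {x, y} r r')
      = (\<Sum>r\<in>LO - E. pmf \<mu> r * pmf (t y r0) r') + (\<Sum>r\<in>E. pmf \<mu> r * pmf (t x r0) r')"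
    unfolding sum.subset_diff[OF E(2) finite_LO]
    by (intro arg_cong2[where f = "(+)"] sum.cong)
      (simp_all add: E_def markov_entry_pair[OF assms(1,2) _ assms(3)])
  also have "\<dots> = (1 - measure_pmf.prob \<mu> E) * pmf (t y r0) r' + measure_pmf.prob \<mu> E * pmf (t x r0) r'"
    using prob_LO_diff[OF assms(4) E(2)] E
    by (simp add: measure_measure_pmf_finite flip: sum_distrib_right)
  also have "\<dots> = pmf (mix_pmf (measure_pmf.prob \<mu> E) (t x r0) (t y r0)) r'"
    by (simp add: pmf_mix_pmf)
  finally show ?thesis .
qed

lemma set_mix_pmf_LO:
  assumes "full_support t" "r0 \<in> LO"
  shows "set_pmf (mix_pmf \<beta> (t x r0) (t y r0)) \<subseteq> LO"
  using set_mix_pmf_subset[of \<beta> "t x r0" "t y r0"] assms unfolding full_support_def by blast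

lemma stationary_pair_iff:
  fixes t :: "'a::finite \<Rightarrow> 'a rel \<Rightarrow> 'a rel pmf"
  assumes "full_support t" "state_independent t" "r0 \<in> LO" "x \<noteq> y" "set_pmf \<mu> \<subseteq> LO"
  shows "stationary t {x, y} \<mu>
           \<longleftrightarrow> \<mu> = mix_pmf (measure_pmf.prob \<mu> {r \<in> LO. (x, y) \<in> r}) (t x r0) (t y r0)"
  using assms(5) set_mix_pmf_LO[OF assms(1,3)] markov_step_pair[OF assms(2-5)]
  by (rule stationary_iff_eq_step)

lemma stat_dist_pair:
  fixes t :: "'a::finite \<Rightarrow> 'a rel \<Rightarrow> 'a rel pmf"
  assumes FS: "full_support t" and SI: "state_independent t" and r0: "r0 \<in> LO" and xy: "x \<noteq> y"
  obtains \<alpha> where "0 < \<alpha>" "\<alpha> < 1" "stat_dist t {x, y} = mix_pmf \<alpha> (t x r0) (t y r0)"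
proof -
  let ?P = "t x r0" and ?Q = "t y r0"
  define E where "E = {r \<in> LO. (x, y) \<in> r}"
  (* Stationary weight of "x above y" in the two-state chain: entry rate over exit plus entry rate. *)
  define \<alpha> where "\<alpha> = measure_pmf.prob ?Q E / ((1 - measure_pmf.prob ?P E) + measure_pmf.prob ?Q E)"
  have "finite E"
    using finite_LO unfolding E_def by simp
  have supp: "set_pmf (t z r0) = LO" for z
    using FS r0 unfolding full_support_def by blast
  obtain rx ry where "rx \<in> LO" "(x, y) \<in> rx" "ry \<in> LO" "(y, x) \<in> ry"
    using ex_LO_pair[OF xy] ex_LO_pair[OF xy[symmetric]] by blast
  then have "rx \<in> E" "ry \<in> UNIV - E"
    unfolding E_def by (auto dest: LO_asym)
  then have "0 < measure_pmf.prob ?P (UNIV - E)" and enter: "0 < measure_pmf.prob ?Q E"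
    using measure_pmf_posI[of ry ?P] measure_pmf_posI[of rx ?Q] supp \<open>ry \<in> LO\<close> E_def by auto
  then have leave: "measure_pmf.prob ?P E < 1"
    using measure_pmf.prob_compl[where A = E and M = ?P] by simp
  have \<alpha>: "0 < \<alpha>" "\<alpha> < 1"
    unfolding \<alpha>_def using leave enter by (simp_all add: divide_less_eq)
  note fixpoint = prob_mix_pmf_eq_weight_iff[OF _ _ \<open>finite E\<close> enter, of _ ?P, folded \<alpha>_def]
  note stationary_iff = stationary_pair_iff[OF FS SI r0 xy, folded E_def]
  have "stationary t {x, y} \<nu> \<longleftrightarrow> \<nu> = mix_pmf \<alpha> ?P ?Q" for \<nu>
  proof
    assume "stationary t {x, y} \<nu>"
    then have "\<nu> = mix_pmf (measure_pmf.prob \<nu> E) ?P ?Q"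
      using stationary_iff stationary_def by blast
    moreover from this have "measure_pmf.prob \<nu> E = \<alpha>"
      using fixpoint measure_nonneg measure_pmf.prob_le_1 by metis
    ultimately show "\<nu> = mix_pmf \<alpha> ?P ?Q"
      by simp
  next
    assume "\<nu> = mix_pmf \<alpha> ?P ?Q"
    moreover have "measure_pmf.prob (mix_pmf \<alpha> ?P ?Q) E = \<alpha>"
      using fixpoint \<alpha> by simp
    ultimately show "stationary t {x, y} \<nu>"
      using stationary_iff[OF set_mix_pmf_LO[OF FS r0]] by simp
  qed
  then have "stat_dist t {x, y} = mix_pmf \<alpha> ?P ?Q"
    by (rule stat_dist_eqI)
  with \<alpha> show ?thesis
    using that by blast
qed

lemma transition_eq_of_stat_dist_triangle:
  fixes t :: "'a::finite \<Rightarrow> 'a rel \<Rightarrow> 'a rel pmf"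
  assumes FS: "full_support t" and SI: "state_independent t" and r: "r \<in> LO"
    and distinct: "x \<noteq> y" "x \<noteq> z" "y \<noteq> z"
    and "stat_dist t {x, z} = stat_dist t {x, y}" "stat_dist t {y, z} = stat_dist t {x, y}"
  shows "t x r = t y r"
proof -
  obtain a where a: "0 < a" "a < 1" "stat_dist t {x, y} = mix_pmf a (t x r) (t y r)"
    using stat_dist_pair[OF FS SI r distinct(1)] .
  obtain b where b: "0 < b" "b < 1" "stat_dist t {x, z} = mix_pmf b (t x r) (t z r)"
    using stat_dist_pair[OF FS SI r distinct(2)] .
  obtain c where c: "0 < c" "c < 1" "stat_dist t {y, z} = mix_pmf c (t y r) (t z r)"
    using stat_dist_pair[OF FS SI r distinct(3)] .
  have "mix_pmf b (t x r) (t z r) = mix_pmf a (t x r) (t y r)"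
    using a(3) b(3) assms(7) by metis
  moreover have "mix_pmf c (t y r) (t z r) = mix_pmf a (t x r) (t y r)"
    using a(3) c(3) assms(8) by metis
  ultimately show ?thesis
    by (rule mix_pmf_triangle_eq[OF a(1,2) b(1,2) c(1,2)])
qed

lemma menu_invariant_if_transition_const:
  fixes t :: "'a::finite \<Rightarrow> 'a rel \<Rightarrow> 'a rel pmf"
  assumes "full_support t" "state_independent t" and const: "\<forall>x y. \<forall>r\<in>LO. t x r = t y r"
  shows "menu_invariant t"
proof -
  obtain r0 :: "'a rel" where r0: "r0 \<in> LO"
    using LO_nonempty by blast
  define p where "p = t undefined r0"
  have "t x r = p" if "r \<in> LO" for x r
  proof -
    have "t x r = t x r0"
      using assms(2) r0 that unfolding state_independent_def by blast
    also have "\<dots> = p"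
      using const r0 unfolding p_def by blast
    finally show ?thesis .
  qed
  moreover have "set_pmf p \<subseteq> LO"
    using assms(1) r0 unfolding full_support_def p_def by blast
  ultimately have "stat_dist t A = p" for A
    by (rule stat_dist_const)
  then show ?thesis
    unfolding menu_invariant_def by simp
qed

lemma ex_third_element:
  fixes x y :: "'a::finite"
  assumes "CARD('a) \<ge> 3"
  obtains z where "z \<noteq> x" "z \<noteq> y"
proof -
  have "\<not> UNIV \<subseteq> {x, y}"
  proof
    assume "UNIV \<subseteq> {x, y}"
    then have "CARD('a) \<le> card {x, y}"
      by (simp add: card_mono)
    also have "\<dots> \<le> 2"
      by (simp add: card_insert_if)
    finally show False
      using assms by simp
  qed
  then show ?thesis
    using that by blast
qed

theorem proposition6:
  fixes t :: "'a::finite \<Rightarrow> 'a rel \<Rightarrow> 'a rel pmf"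
  assumes "CARD('a) \<ge> 3"
    and "transition_fun t"
    and "full_support t"
    and "state_independent t"
  shows "menu_invariant t \<longleftrightarrow> (\<forall>x y. \<forall>r\<in>LO. t x r = t y r)"
proof
  assume MI: "menu_invariant t"
  show "\<forall>x y. \<forall>r\<in>LO. t x r = t y r"
  proof (intro allI ballI)
    fix x y and r :: "'a rel"
    assume r: "r \<in> LO"
    show "t x r = t y r"
    proof (cases "x = y")
      case False
      obtain z where z: "z \<noteq> x" "z \<noteq> y"
        using ex_third_element[OF assms(1)] .
      with False have "{x, y} \<in> X2" "{x, z} \<in> X2" "{y, z} \<in> X2"
        by (auto simp: X2_def)
      with MI have "stat_dist t {x, z} = stat_dist t {x, y}" "stat_dist t {y, z} = stat_dist t {x, y}"
        unfolding menu_invariant_def by blast+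
      with assms(3,4) r False z show ?thesis
        by (intro transition_eq_of_stat_dist_triangle[where t = t and z = z]) auto
    qed simp
  qed
next
  assume "\<forall>x y. \<forall>r\<in>LO. t x r = t y r"
  with assms(3,4) show "menu_invariant t"
    by (rule menu_invariant_if_transition_const)
qed

end
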